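(* Let $\rho_1\neq\rho_2$ be two rays of $C_{6,2}$ of type $(3,3)$ and let $\tau$ be the 2-face of $C_{6,2}$ spanned by $\rho_1$ and $\rho_2$. Then $\tau\subseteq\Phi(\mathcal Z_2^6)$.
   Context: $\mathcal Z_2$ is the set of zonoids in $\mathbb R^2$ (equivalently, centrally symmetric convex bodies). For $Z=(Z_1,\dots,Z_6)\in\mathcal Z_2^6$ let $\mathrm V_{ij}=\mathrm V(Z_i,Z_j)$ be the mixed area, and $\Phi(Z)\in\mathbb R^{15}$ the vector with coordinates $\mathrm V_{I_1}\mathrm V_{I_2}\mathrm V_{I_3}$ indexed by all partitions $I_1|I_2|I_3$ of $[6]$ into pairs. $C_{6,2}$ is the conic hull of $\Phi(\mathcal Z_2^6)$ (a polyhedral cone in which any two extreme rays span a 2-face). For a 6-tuple $U$ of nonzero vectors in $\mathbb R^2$, $\Phi(U)=\Phi([0,u_1],\dots,[0,u_6])$. A ray is of type $(3,3)$ if it is spanned by $\Phi(U)$ for some $U$ such that $[6]=J_1\sqcup J_2$ with $|J_1|=|J_2|=3$, the vectors indexed by $J_1$ are pairwise parallel, those indexed by $J_2$ are pairwise parallel, and no vector indexed by $J_1$ is parallel to one indexed by $J_2$. *)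

theory Defs
  imports "HOL-Analysis.Analysis"
begin

text \<open>Zonoids in the plane = centrally symmetric convex bodies
  (nonempty compact convex sets symmetric about some centre).\<close>
definition zonoid2 :: "(real^2) set \<Rightarrow> bool" where
  "zonoid2 K \<longleftrightarrow> K \<noteq> {} \<and> compact K \<and> convex K \<and>
     (\<exists>c. \<forall>x\<in>K. 2 *\<^sub>R c - x \<in> K)"

definition minkowski_sum :: "(real^2) set \<Rightarrow> (real^2) set \<Rightarrow> (real^2) set" where
  "minkowski_sum K L = {x + y | x y. x \<in> K \<and> y \<in> L}"

text \<open>Mixed area, via area(K+L) = area K + 2 V(K,L) + area L.\<close>
definition mixed_area :: "(real^2) set \<Rightarrow> (real^2) set \<Rightarrow> real" where
  "mixed_area K L =
     (measure lebesgue (minkowski_sum K L) - measure lebesgue K - measure lebesgue L) / 2"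

definition pairings6 :: "nat set set set" where
  "pairings6 = {P. (\<Union>P) = {1..6} \<and> (\<forall>B\<in>P. card B = 2) \<and>
                  (\<forall>B\<in>P. \<forall>B'\<in>P. B \<noteq> B' \<longrightarrow> B \<inter> B' = {})}"

text \<open>Phi(Z), a vector in R^15 represented as a function on the pairings
  (zero outside pairings6).\<close>
definition Phi :: "(nat \<Rightarrow> (real^2) set) \<Rightarrow> nat set set \<Rightarrow> real" where
  "Phi Z P = (if P \<in> pairings6 then (\<Prod>B\<in>P. mixed_area (Z (Min B)) (Z (Max B))) else 0)"

definition zonoid_tuples :: "(nat \<Rightarrow> (real^2) set) set" where
  "zonoid_tuples = {Z. \<forall>i\<in>{1..6}. zonoid2 (Z i)}"

definition Phi_image :: "(nat set set \<Rightarrow> real) set" where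
  "Phi_image = Phi ` zonoid_tuples"

definition C62 :: "(nat set set \<Rightarrow> real) set" where
  "C62 = {f. \<exists>(n::nat) (c::nat \<Rightarrow> real) Zs. (\<forall>k<n. c k \<ge> 0 \<and> Zs k \<in> zonoid_tuples) \<and>
                     f = (\<lambda>P. \<Sum>k<n. c k * Phi (Zs k) P)}"

definition PhiU :: "(nat \<Rightarrow> real^2) \<Rightarrow> nat set set \<Rightarrow> real" where
  "PhiU u = Phi (\<lambda>i. closed_segment 0 (u i))"

definition ray_of :: "(nat set set \<Rightarrow> real) \<Rightarrow> (nat set set \<Rightarrow> real) set" where
  "ray_of v = {(\<lambda>P. t * v P) | t. t \<ge> 0}"

definition extreme_ray_C62 :: "(nat set set \<Rightarrow> real) set \<Rightarrow> bool" where
  "extreme_ray_C62 \<rho> \<longleftrightarrow> (\<exists>v. v \<noteq> (\<lambda>P. 0) \<and> \<rho> = ray_of v) \<and> \<rho> \<subseteq> C62 \<and>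
     (\<forall>x y. x \<in> C62 \<longrightarrow> y \<in> C62 \<longrightarrow> (\<lambda>P. x P + y P) \<in> \<rho> \<longrightarrow> x \<in> \<rho> \<and> y \<in> \<rho>)"

definition parallel2 :: "real^2 \<Rightarrow> real^2 \<Rightarrow> bool" where
  "parallel2 u v \<longleftrightarrow> (\<exists>c. u = c *\<^sub>R v)"

definition type33 :: "(nat \<Rightarrow> real^2) \<Rightarrow> bool" where
  "type33 u \<longleftrightarrow> (\<forall>i\<in>{1..6}. u i \<noteq> 0) \<and>
     (\<exists>J1 J2. J1 \<union> J2 = {1..6} \<and> J1 \<inter> J2 = {} \<and> card J1 = 3 \<and> card J2 = 3 \<and>
        (\<forall>i\<in>J1. \<forall>j\<in>J1. parallel2 (u i) (u j)) \<and>
        (\<forall>i\<in>J2. \<forall>j\<in>J2. parallel2 (u i) (u j)) \<and>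
        (\<forall>i\<in>J1. \<forall>j\<in>J2. \<not> parallel2 (u i) (u j)))"

definition ray_type33 :: "(nat set set \<Rightarrow> real) set \<Rightarrow> bool" where
  "ray_type33 \<rho> \<longleftrightarrow> (\<exists>u. type33 u \<and> \<rho> = ray_of (PhiU u))"

text \<open>Conic hull of two rays (the 2-face they span).\<close>
definition cone_sum :: "(nat set set \<Rightarrow> real) set \<Rightarrow> (nat set set \<Rightarrow> real) set \<Rightarrow> (nat set set \<Rightarrow> real) set" where
  "cone_sum A B = {(\<lambda>P. x P + y P) | x y. x \<in> A \<and> y \<in> B}"

end

theory Submission
  imports Defs
begin

(* If u has type (3,3), write u i = c i p for i in one part J and u i = c i q on the other part.
   Then |det(u i, u j)| vanishes inside a part and equals |c i| |c j| |det(p, q)| across the parts,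
   so PhiU u is a nonnegative multiple of the indicator of the pairings all of whose pairs cross J.
   A point of the face spanned by two such rays is therefore alpha [crosses J] + beta [crosses K].
   If J and K induce the same partition of [6], this is the image of a single (3,3) tuple.
   Otherwise, after replacing K by its complement, J = {a,a',b} and K = {a,a',c}, and an explicit
   tuple of six segments realises the sum. *)

definition det2 :: "real^2 \<Rightarrow> real^2 \<Rightarrow> real" where
  "det2 x y = x$1 * y$2 - x$2 * y$1"

lemma abs_det2_commute: "\<bar>det2 y x\<bar> = \<bar>det2 x y\<bar>"
  by (simp add: det2_def algebra_simps abs_minus_commute)

lemma det2_scaleR: "det2 (a *\<^sub>R x) (b *\<^sub>R y) = a * b * det2 x y"
  by (simp add: det2_def algebra_simps)

lemma det2_self: "det2 x x = 0"
  by (simp add: det2_def)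

definition parallelogram_map :: "real^2 \<Rightarrow> real^2 \<Rightarrow> real^2 \<Rightarrow> real^2" where
  "parallelogram_map x y z = z$1 *\<^sub>R x + z$2 *\<^sub>R y"

lemma linear_parallelogram_map: "linear (parallelogram_map x y)"
  unfolding parallelogram_map_def linear_iff by (auto simp: algebra_simps)

lemma measure_parallelogram:
  "measure lebesgue (parallelogram_map x y ` cbox 0 1) = \<bar>det2 x y\<bar>"
proof -
  have "det (matrix (parallelogram_map x y)) = det2 x y"
    by (simp add: det_2 matrix_def parallelogram_map_def det2_def axis_def)
  moreover have "measure lebesgue (cbox (0::real^2) 1) = 1"
  proof -
    have "(0::real^2) \<in> cbox 0 1" by (auto simp: mem_box_cart)
    then have "cbox (0::real^2) 1 \<noteq> {}" by blast
    then show ?thesis by (simp add: content_cbox_cart)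
  qed
  ultimately show ?thesis
    using measure_linear_image[OF linear_parallelogram_map, of "cbox 0 1" x y] by simp
qed

lemma minkowski_sum_segments:
  "minkowski_sum (closed_segment 0 x) (closed_segment 0 y) = parallelogram_map x y ` cbox 0 1"
proof (intro equalityI subsetI)
  fix p assume "p \<in> minkowski_sum (closed_segment 0 x) (closed_segment 0 y)"
  then obtain s t where st: "0 \<le> s" "s \<le> 1" "0 \<le> t" "t \<le> 1" "p = s *\<^sub>R x + t *\<^sub>R y"
    by (auto simp: closed_segment_def minkowski_sum_def)
  then have "vector [s, t] \<in> cbox (0::real^2) 1" "p = parallelogram_map x y (vector [s, t])"
    by (auto simp: mem_box_cart forall_2 parallelogram_map_def)
  then show "p \<in> parallelogram_map x y ` cbox 0 1" by blast
next
  fix p assume "p \<in> parallelogram_map x y ` cbox 0 1"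
  then obtain z :: "real^2" where z: "z \<in> cbox 0 1" "p = z$1 *\<^sub>R x + z$2 *\<^sub>R y"
    by (auto simp: parallelogram_map_def)
  then have "z$1 *\<^sub>R x \<in> closed_segment 0 x" "z$2 *\<^sub>R y \<in> closed_segment 0 y"
    by (auto simp: closed_segment_def mem_box_cart)
  then show "p \<in> minkowski_sum (closed_segment 0 x) (closed_segment 0 y)"
    unfolding minkowski_sum_def z(2) by blast
qed

lemma segment_eq_parallelogram: "closed_segment 0 x = parallelogram_map x 0 ` cbox 0 1"
proof -
  have "minkowski_sum (closed_segment 0 x) (closed_segment 0 0) = closed_segment 0 x"
    by (auto simp: minkowski_sum_def)
  then show ?thesis by (metis minkowski_sum_segments)
qed

lemma mixed_area_segments:
  "mixed_area (closed_segment 0 x) (closed_segment 0 y) = \<bar>det2 x y\<bar> / 2"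
  unfolding mixed_area_def minkowski_sum_segments
  by (simp add: segment_eq_parallelogram measure_parallelogram det2_def)

lemma zonoid2_segment: "zonoid2 (closed_segment 0 x)"
  unfolding zonoid2_def
proof (intro conjI exI[of _ "x /\<^sub>R 2"] ballI)
  fix p assume "p \<in> closed_segment 0 x"
  then obtain t where "0 \<le> t" "t \<le> 1" "p = t *\<^sub>R x" by (auto simp: closed_segment_def)
  then show "2 *\<^sub>R (x /\<^sub>R 2) - p \<in> closed_segment 0 x"
    by (auto simp: closed_segment_def algebra_simps intro!: exI[of _ "1 - t"])
qed auto

lemma PhiU_in_Phi_image: "PhiU v \<in> Phi_image"
  unfolding Phi_image_def PhiU_def zonoid_tuples_def using zonoid2_segment by blast

lemma PhiU_eq:
  "PhiU v P = (if P \<in> pairings6 then (\<Prod>B\<in>P. \<bar>det2 (v (Min B)) (v (Max B))\<bar> / 2) else 0)"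
  unfolding PhiU_def Phi_def by (simp add: mixed_area_segments)

lemma abs_det2_min_max: "\<bar>det2 (v (min i j)) (v (max i j))\<bar> = \<bar>det2 (v i) (v j)\<bar>"
  by (cases "i \<le> j") (auto simp: max_def min_def abs_det2_commute)

definition matchings :: "'a set \<Rightarrow> 'a set set set" where
  "matchings S = {P. \<Union>P = S \<and> (\<forall>B\<in>P. card B = 2) \<and>
                    (\<forall>B\<in>P. \<forall>B'\<in>P. B \<noteq> B' \<longrightarrow> B \<inter> B' = {})}"

lemma pairings6_eq_matchings: "pairings6 = matchings {1..6}"
  by (simp add: pairings6_def matchings_def)

lemma matchings_empty: "P \<in> matchings {} \<Longrightarrow> P = {}"
  by (fastforce simp: matchings_def)

lemma matchings_insertE:
  assumes "x \<notin> S" "P \<in> matchings (insert x S)"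
  obtains y Q where "y \<in> S" "Q \<in> matchings (S - {y})" "P = insert {x, y} Q"
proof -
  have U: "\<Union>P = insert x S" and card: "\<And>B. B \<in> P \<Longrightarrow> card B = 2"
    and disj: "\<And>B B'. B \<in> P \<Longrightarrow> B' \<in> P \<Longrightarrow> B \<noteq> B' \<Longrightarrow> B \<inter> B' = {}"
    using assms(2) by (auto simp: matchings_def)
  obtain B where B: "B \<in> P" "x \<in> B" using U by blast
  have "card (B - {x}) = 1" using card[OF B(1)] B(2) by simp
  then obtain y where "B - {x} = {y}" by (auto simp: card_1_singleton_iff)
  then have y: "B = {x, y}" "y \<noteq> x" using B(2) by auto
  have "y \<in> S" using U B y by blast
  moreover have "P - {B} \<in> matchings (S - {y})"
  proof -
    have "\<Union>(P - {B}) = S - {y}"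
    proof (intro equalityI subsetI)
      fix z assume "z \<in> \<Union>(P - {B})"
      then obtain B' where "B' \<in> P" "B' \<noteq> B" "z \<in> B'" by blast
      moreover from this have "B' \<inter> B = {}" using disj B(1) by blast
      ultimately show "z \<in> S - {y}" using U y by blast
    next
      fix z assume z: "z \<in> S - {y}"
      then obtain B' where "B' \<in> P" "z \<in> B'" using U by blast
      moreover have "z \<notin> B" using z y assms(1) by auto
      ultimately show "z \<in> \<Union>(P - {B})" by blast
    qed
    then show ?thesis using card disj by (auto simp: matchings_def)
  qed
  moreover have "P = insert {x, y} (P - {B})" using B y by blast
  ultimately show thesis using that by blast
qed

lemma matchings_two:
  assumes "p \<noteq> q" "P \<in> matchings {p, q}"
  shows "P = {{p, q}}"
proof -
  obtain y Q where "y \<in> {q}" "Q \<in> matchings ({q} - {y})" "P = insert {p, y} Q"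
    by (rule matchings_insertE[of p "{q}" P]) (use assms in auto)
  then show ?thesis using matchings_empty by auto
qed

lemma matchings_four:
  assumes "distinct [p, q, r, s]" "P \<in> matchings {p, q, r, s}"
  shows "P = {{p, q}, {r, s}} \<or> P = {{p, r}, {q, s}} \<or> P = {{p, s}, {q, r}}"
proof -
  obtain y Q where y: "y \<in> {q, r, s}" and Q: "Q \<in> matchings ({q, r, s} - {y})"
    and P: "P = insert {p, y} Q"
    by (rule matchings_insertE[of p "{q, r, s}" P]) (use assms in auto)
  from y consider "y = q" | "y = r" | "y = s" by blast
  then show ?thesis
  proof cases
    case 1
    with assms(1) have "{q, r, s} - {y} = {r, s}" by auto
    with Q have "Q \<in> matchings {r, s}" by simp
    with assms(1) have "Q = {{r, s}}" by (simp add: matchings_two)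
    then show ?thesis using P 1 by simp
  next
    case 2
    with assms(1) have "{q, r, s} - {y} = {q, s}" by auto
    with Q have "Q \<in> matchings {q, s}" by simp
    with assms(1) have "Q = {{q, s}}" by (simp add: matchings_two)
    then show ?thesis using P 2 by simp
  next
    case 3
    with assms(1) have "{q, r, s} - {y} = {q, r}" by auto
    with Q have "Q \<in> matchings {q, r}" by simp
    with assms(1) have "Q = {{q, r}}" by (simp add: matchings_two)
    then show ?thesis using P 3 by simp
  qed
qed

lemma matchings_six:
  assumes "distinct [x1, x2, x3, x4, x5, x6]" "P \<in> matchings {x1, x2, x3, x4, x5, x6}"
  shows "P = {{x1,x2},{x3,x4},{x5,x6}} \<or> P = {{x1,x2},{x3,x5},{x4,x6}} \<or>
    P = {{x1,x2},{x3,x6},{x4,x5}} \<or> P = {{x1,x3},{x2,x4},{x5,x6}} \<or>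
    P = {{x1,x3},{x2,x5},{x4,x6}} \<or> P = {{x1,x3},{x2,x6},{x4,x5}} \<or>
    P = {{x1,x4},{x2,x3},{x5,x6}} \<or> P = {{x1,x4},{x2,x5},{x3,x6}} \<or>
    P = {{x1,x4},{x2,x6},{x3,x5}} \<or> P = {{x1,x5},{x2,x3},{x4,x6}} \<or>
    P = {{x1,x5},{x2,x4},{x3,x6}} \<or> P = {{x1,x5},{x2,x6},{x3,x4}} \<or>
    P = {{x1,x6},{x2,x3},{x4,x5}} \<or> P = {{x1,x6},{x2,x4},{x3,x5}} \<or>
    P = {{x1,x6},{x2,x5},{x3,x4}}"
proof -
  obtain y Q where y: "y \<in> {x2, x3, x4, x5, x6}"
    and Q: "Q \<in> matchings ({x2, x3, x4, x5, x6} - {y})" and P: "P = insert {x1, y} Q"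
    by (rule matchings_insertE[of x1 "{x2, x3, x4, x5, x6}" P]) (use assms in auto)
  from y consider "y = x2" | "y = x3" | "y = x4" | "y = x5" | "y = x6" by blast
  then show ?thesis
  proof cases
    case 1
    with assms(1) have "{x2, x3, x4, x5, x6} - {y} = {x3, x4, x5, x6}" by auto
    with Q assms(1) have "Q \<in> matchings {x3, x4, x5, x6}" by simp
    with assms(1) have "Q = {{x3, x4}, {x5, x6}} \<or> Q = {{x3, x5}, {x4, x6}} \<or> Q = {{x3, x6}, {x4, x5}}"
      by (simp add: matchings_four)
    then show ?thesis unfolding P 1 by (elim disjE) simp_all
  next
    case 2
    with assms(1) have "{x2, x3, x4, x5, x6} - {y} = {x2, x4, x5, x6}" by auto
    with Q assms(1) have "Q \<in> matchings {x2, x4, x5, x6}" by simp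
    with assms(1) have "Q = {{x2, x4}, {x5, x6}} \<or> Q = {{x2, x5}, {x4, x6}} \<or> Q = {{x2, x6}, {x4, x5}}"
      by (simp add: matchings_four)
    then show ?thesis unfolding P 2 by (elim disjE) simp_all
  next
    case 3
    with assms(1) have "{x2, x3, x4, x5, x6} - {y} = {x2, x3, x5, x6}" by auto
    with Q assms(1) have "Q \<in> matchings {x2, x3, x5, x6}" by simp
    with assms(1) have "Q = {{x2, x3}, {x5, x6}} \<or> Q = {{x2, x5}, {x3, x6}} \<or> Q = {{x2, x6}, {x3, x5}}"
      by (simp add: matchings_four)
    then show ?thesis unfolding P 3 by (elim disjE) simp_all
  next
    case 4
    with assms(1) have "{x2, x3, x4, x5, x6} - {y} = {x2, x3, x4, x6}" by auto
    with Q assms(1) have "Q \<in> matchings {x2, x3, x4, x6}" by simp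
    with assms(1) have "Q = {{x2, x3}, {x4, x6}} \<or> Q = {{x2, x4}, {x3, x6}} \<or> Q = {{x2, x6}, {x3, x4}}"
      by (simp add: matchings_four)
    then show ?thesis unfolding P 4 by (elim disjE) simp_all
  next
    case 5
    with assms(1) have "{x2, x3, x4, x5, x6} - {y} = {x2, x3, x4, x5}" by auto
    with Q assms(1) have "Q \<in> matchings {x2, x3, x4, x5}" by simp
    with assms(1) have "Q = {{x2, x3}, {x4, x5}} \<or> Q = {{x2, x4}, {x3, x5}} \<or> Q = {{x2, x5}, {x3, x4}}"
      by (simp add: matchings_four)
    then show ?thesis unfolding P 5 by (elim disjE) simp_all
  qed
qed

lemma pairing_block_subset: "P \<in> pairings6 \<Longrightarrow> B \<in> P \<Longrightarrow> B \<subseteq> {1..6}"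
  by (auto simp: pairings6_def)

lemma finite_pairing_block: "P \<in> pairings6 \<Longrightarrow> B \<in> P \<Longrightarrow> finite B"
  by (meson finite_atLeastAtMost finite_subset pairing_block_subset)

lemma pairing_blockE:
  assumes "P \<in> pairings6" "B \<in> P"
  obtains i j where "B = {i, j}" "i \<noteq> j"
  using assms by (auto simp: pairings6_def card_2_iff)

lemma PhiU_cong: "(\<And>i. i \<in> {1..6} \<Longrightarrow> u i = v i) \<Longrightarrow> PhiU u = PhiU v"
proof -
  assume uv: "\<And>i. i \<in> {1..6} \<Longrightarrow> u i = v i"
  have "u (Min B) = v (Min B) \<and> u (Max B) = v (Max B)" if B: "B \<in> P" "P \<in> pairings6" for B P
  proof -
    obtain i j where "B = {i, j}" using pairing_blockE[OF B(2,1)] .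
    then have "Min B \<in> B" "Max B \<in> B" by (auto simp: min_def max_def)
    then show ?thesis using uv pairing_block_subset[OF B(2,1)] by blast
  qed
  then show "PhiU u = PhiU v" by (auto simp: PhiU_eq intro!: prod.cong)
qed

lemma finite_pairing: "P \<in> pairings6 \<Longrightarrow> finite P"
  by (rule finite_subset[of P "Pow {1..6}"]) (auto simp: pairings6_def)

lemma card_pairing: "P \<in> pairings6 \<Longrightarrow> card P = 3"
proof -
  assume P: "P \<in> pairings6"
  then have "card (\<Union>P) = sum card P"
    using finite_pairing_block[OF P]
    by (intro card_Union_disjoint) (auto simp: pairings6_def pairwise_def disjnt_def)
  also have "\<dots> = 2 * card P" using P by (simp add: pairings6_def)
  finally show "card P = 3" using P by (simp add: pairings6_def)
qed

lemma prod_over_pairing: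
  assumes "P \<in> pairings6"
  shows "(\<Prod>B\<in>P. \<Prod>i\<in>B. f i) = (\<Prod>i\<in>{1..6}. f i)"
proof -
  have "\<forall>B\<in>P. finite B" using finite_pairing_block[OF assms] by blast
  then show ?thesis using prod.Union_disjoint[of P f] assms by (simp add: pairings6_def)
qed

definition crosses :: "nat set \<Rightarrow> nat set set \<Rightarrow> bool" where
  "crosses J P \<longleftrightarrow> P \<in> pairings6 \<and> (\<forall>B\<in>P. \<not> B \<subseteq> J \<and> \<not> B \<subseteq> - J)"

lemma crosses_complement: "crosses ({1..6} - J) = crosses J"
proof (intro ext)
  fix P
  have "(\<forall>B\<in>P. \<not> B \<subseteq> {1..6} - J \<and> \<not> B \<subseteq> - ({1..6} - J)) \<longleftrightarrow>
        (\<forall>B\<in>P. \<not> B \<subseteq> J \<and> \<not> B \<subseteq> - J)" if P: "P \<in> pairings6"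
  proof (rule ball_cong[OF refl])
    fix B assume "B \<in> P"
    then have "B \<subseteq> {1..6}" using pairing_block_subset[OF P] by blast
    then have "B \<subseteq> {1..6} - J \<longleftrightarrow> B \<subseteq> - J" "B \<subseteq> - ({1..6} - J) \<longleftrightarrow> B \<subseteq> J" by auto
    then show "(\<not> B \<subseteq> {1..6} - J \<and> \<not> B \<subseteq> - ({1..6} - J)) \<longleftrightarrow> (\<not> B \<subseteq> J \<and> \<not> B \<subseteq> - J)"
      by blast
  qed
  then show "crosses ({1..6} - J) P = crosses J P"
    unfolding crosses_def by blast
qed

lemma abs_det2_two_directions:
  "\<bar>det2 (c i *\<^sub>R (if i \<in> J then p else q)) (c j *\<^sub>R (if j \<in> J then p else q))\<bar> =
     (if (i \<in> J) = (j \<in> J) then 0 else \<bar>c i\<bar> * \<bar>c j\<bar> * \<bar>det2 p q\<bar>)"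
  by (auto simp: det2_scaleR det2_self abs_mult abs_det2_commute[of q p])

lemma PhiU_two_directions:
  "PhiU (\<lambda>i. c i *\<^sub>R (if i \<in> J then p else q)) =
     (\<lambda>P. if crosses J P then \<bar>det2 p q\<bar> ^ 3 * (\<Prod>i\<in>{1..6}. \<bar>c i\<bar>) / 8 else 0)"
    (is "PhiU ?v = _")
proof
  fix P
  show "PhiU ?v P = (if crosses J P then \<bar>det2 p q\<bar> ^ 3 * (\<Prod>i\<in>{1..6}. \<bar>c i\<bar>) / 8 else 0)"
  proof (cases "P \<in> pairings6")
    case False
    then show ?thesis by (simp add: PhiU_eq crosses_def)
  next
    case P: True
    let ?f = "\<lambda>B. \<bar>det2 (?v (Min B)) (?v (Max B))\<bar> / 2"
    have PhiU_prod: "PhiU ?v P = (\<Prod>B\<in>P. ?f B)" using P by (simp only: PhiU_eq if_True)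
    show ?thesis
    proof (cases "crosses J P")
      case True
      have "?f B = (\<Prod>i\<in>B. \<bar>c i\<bar>) * (\<bar>det2 p q\<bar> / 2)" if BP: "B \<in> P" for B
      proof -
        obtain i j where B: "B = {i, j}" "i \<noteq> j" using pairing_blockE[OF P BP] .
        then have "(i \<in> J) \<noteq> (j \<in> J)" using True BP by (auto simp: crosses_def)
        then show ?thesis
          using B abs_det2_min_max[of ?v i j] abs_det2_two_directions[of c i J p q j] by simp
      qed
      then have "(\<Prod>B\<in>P. ?f B) = (\<Prod>B\<in>P. (\<Prod>i\<in>B. \<bar>c i\<bar>) * (\<bar>det2 p q\<bar> / 2))"
        by (rule prod.cong[OF refl])
      also have "\<dots> = (\<Prod>B\<in>P. \<Prod>i\<in>B. \<bar>c i\<bar>) * (\<bar>det2 p q\<bar> / 2) ^ card P"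
        by (simp only: prod.distrib prod_constant)
      also have "\<dots> = (\<Prod>i\<in>{1..6}. \<bar>c i\<bar>) * (\<bar>det2 p q\<bar> / 2) ^ 3"
        using P by (simp only: prod_over_pairing card_pairing)
      finally show ?thesis using True by (simp add: PhiU_prod power_divide)
    next
      case False
      then obtain B where B: "B \<in> P" "B \<subseteq> J \<or> B \<subseteq> - J" using P by (auto simp: crosses_def)
      obtain i j where ij: "B = {i, j}" using pairing_blockE[OF P B(1)] .
      have "?f B = 0"
        using B(2) ij abs_det2_min_max[of ?v i j] abs_det2_two_directions[of c i J p q j] by auto
      then have "(\<Prod>B\<in>P. ?f B) = 0" by (intro prod_zero[OF finite_pairing[OF P]] bexI[OF _ B(1)])
      then show ?thesis using False by (simp only: PhiU_prod if_False)
    qed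
  qed
qed

lemma type33_two_directions:
  assumes "type33 u"
  obtains J c p q where "J \<subseteq> {1..6}" "card J = 3"
    "\<And>i. i \<in> {1..6} \<Longrightarrow> u i = c i *\<^sub>R (if i \<in> J then p else q)"
proof -
  obtain J1 J2 where U: "J1 \<union> J2 = {1..6}" and "J1 \<inter> J2 = {}" "card J1 = 3" "card J2 = 3"
    and par1: "\<forall>i\<in>J1. \<forall>j\<in>J1. parallel2 (u i) (u j)"
    and par2: "\<forall>i\<in>J2. \<forall>j\<in>J2. parallel2 (u i) (u j)"
    using assms unfolding type33_def by blast
  moreover obtain i0 j0 where "i0 \<in> J1" "j0 \<in> J2"
    using \<open>card J1 = 3\<close> \<open>card J2 = 3\<close> by (metis card.empty ex_in_conv zero_neq_numeral)
  ultimately have "\<forall>i\<in>{1..6}. \<exists>k. u i = k *\<^sub>R (if i \<in> J1 then u i0 else u j0)"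
    by (auto simp: parallel2_def)
  then obtain c where "\<forall>i\<in>{1..6}. u i = c i *\<^sub>R (if i \<in> J1 then u i0 else u j0)"
    by (metis bchoice)
  then show thesis using that[of J1 c "u i0" "u j0"] U \<open>card J1 = 3\<close> by blast
qed

lemma PhiU_type33:
  assumes "type33 u"
  obtains J \<sigma> where "J \<subseteq> {1..6}" "card J = 3" "0 \<le> \<sigma>"
    "PhiU u = (\<lambda>P. if crosses J P then \<sigma> else 0)"
proof -
  obtain J c p q where J: "J \<subseteq> {1..6}" "card J = 3"
    and u: "\<And>i. i \<in> {1..6} \<Longrightarrow> u i = c i *\<^sub>R (if i \<in> J then p else q)"
    using type33_two_directions[OF assms] by blast
  have "PhiU u = PhiU (\<lambda>i. c i *\<^sub>R (if i \<in> J then p else q))"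
    using u by (rule PhiU_cong)
  also have "\<dots> = (\<lambda>P. if crosses J P then \<bar>det2 p q\<bar> ^ 3 * (\<Prod>i\<in>{1..6}. \<bar>c i\<bar>) / 8 else 0)"
    by (rule PhiU_two_directions)
  finally show thesis by (intro that[OF J]) (simp_all add: prod_nonneg)
qed

lemma ray_type33_memberE:
  assumes "ray_type33 \<rho>" "x \<in> \<rho>"
  obtains J \<sigma> where "J \<subseteq> {1..6}" "card J = 3" "0 \<le> \<sigma>"
    "x = (\<lambda>P. if crosses J P then \<sigma> else 0)"
proof -
  obtain u s where u: "type33 u" and s: "0 \<le> s" and x: "x = (\<lambda>P. s * PhiU u P)"
    using assms unfolding ray_type33_def ray_of_def by blast
  obtain J \<sigma> where J: "J \<subseteq> {1..6}" "card J = 3" and "0 \<le> \<sigma>"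
    and PhiU_u: "PhiU u = (\<lambda>P. if crosses J P then \<sigma> else 0)"
    using PhiU_type33[OF u] by blast
  show thesis
  proof (rule that[OF J])
    show "0 \<le> s * \<sigma>" using s \<open>0 \<le> \<sigma>\<close> by simp
    show "x = (\<lambda>P. if crosses J P then s * \<sigma> else 0)" unfolding x PhiU_u by (simp add: fun_eq_iff)
  qed
qed

lemma crossing_in_range_PhiU:
  assumes "0 \<le> \<alpha>"
  shows "\<exists>v. PhiU v = (\<lambda>P. if crosses J P then \<alpha> else 0)"
proof -
  define c where "c i = (if i = 1 then 8 * \<alpha> else 1)" for i :: nat
  have "\<bar>c i\<bar> = (if i = 1 then 8 * \<alpha> else 1)" for i using assms by (simp add: c_def)
  then have prod_c: "(\<Prod>i\<in>{1..6}. \<bar>c i\<bar>) = 8 * \<alpha>" by simp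
  have det: "det2 (vector [1, 0]) (vector [0, 1]) = 1" by (simp add: det2_def)
  have "PhiU (\<lambda>i. c i *\<^sub>R (if i \<in> J then vector [1, 0] else vector [0, 1])) =
                     (\<lambda>P. if crosses J P then \<alpha> else 0)"
    unfolding PhiU_two_directions prod_c det by (simp add: fun_eq_iff)
  then show ?thesis by blast
qed

lemma PhiU_three_blocks:
  assumes "{{p, q}, {r, s}, {t, w}} \<in> pairings6" "distinct [p, q, r, s, t, w]"
  shows "PhiU v {{p, q}, {r, s}, {t, w}} =
           \<bar>det2 (v p) (v q)\<bar> * \<bar>det2 (v r) (v s)\<bar> * \<bar>det2 (v t) (v w)\<bar> / 8"
proof -
  have "{p, q} \<noteq> {r, s}" "{p, q} \<noteq> {t, w}" "{r, s} \<noteq> {t, w}"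
    using assms(2) by (auto simp: doubleton_eq_iff)
  then show ?thesis using assms(1) by (simp add: PhiU_eq abs_det2_min_max)
qed

lemma PhiU_two_crossings:
  assumes dist: "distinct [a, a', b, c, d, d']" and U: "{1..6} = {a, a', b, c, d, d'}"
    and "0 \<le> \<alpha>" "0 \<le> \<beta>"
  shows "\<exists>v. PhiU v =
    (\<lambda>P. (if crosses {a, a', b} P then \<alpha> else 0) + (if crosses {a, a', c} P then \<beta> else 0))"
proof -
  (* PhiU v vanishes on pairings containing {a,a'} or {d,d'}.  The others cross {a,a',b} or
     {a,a',c}: matching {a,a'} with {d,d'} and b with c gives alpha + beta, c with a or a' and
     b with d or d' gives alpha, b with a or a' and c with d or d' gives beta. *)
  define v :: "nat \<Rightarrow> real^2" where
    "v i = (if i \<in> {a, a'} then vector [1, 0] else if i \<in> {d, d'} then vector [0, 1]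
            else if i = b then vector [1, - 8 * \<beta>] else vector [1, 8 * \<alpha>])" for i
  have v: "v a = vector [1, 0]" "v a' = vector [1, 0]" "v d = vector [0, 1]" "v d' = vector [0, 1]"
    "v b = vector [1, - 8 * \<beta>]" "v c = vector [1, 8 * \<alpha>]"
    using dist by (auto simp: v_def)
  have "PhiU v P = (if crosses {a, a', b} P then \<alpha> else 0) + (if crosses {a, a', c} P then \<beta> else 0)"
    for P
  proof (cases "P \<in> pairings6")
    case False
    then show ?thesis by (simp add: PhiU_eq crosses_def)
  next
    case True
    then have "P \<in> matchings {a, a', b, c, d, d'}" by (simp only: pairings6_eq_matchings U)
    have "distinct [d', d, c, b, a', a]" using dist by auto
    with matchings_six[OF dist \<open>P \<in> matchings _\<close>] show ?thesis
      using True dist \<open>0 \<le> \<alpha>\<close> \<open>0 \<le> \<beta>\<close>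
      by (elim disjE) (simp_all add: PhiU_three_blocks crosses_def v det2_def)
  qed
  then show ?thesis by blast
qed

lemma two_overlapping_triplesE:
  assumes "J \<subseteq> S" "K \<subseteq> S" "card S = 6" "card J = 3" "card K = 3" "card (J \<inter> K) = 2"
  obtains a a' b c d d' where "distinct [a, a', b, c, d, d']" "S = {a, a', b, c, d, d'}"
    "J = {a, a', b}" "K = {a, a', c}"
proof -
  have "finite S" using assms(3) card_ge_0_finite by force
  then have fin: "finite J" "finite K" using assms(1,2) finite_subset by blast+
  obtain a a' where A: "J \<inter> K = {a, a'}" "a \<noteq> a'" using assms(6) card_2_iff by metis
  have "card (J - K) = 1" using fin assms by (simp add: card_Diff_subset_Int)
  then obtain b where B: "J - K = {b}" using card_1_singleton_iff by (metis One_nat_def)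
  have "card (K - J) = 1" using fin assms by (simp add: card_Diff_subset_Int Int_commute)
  then obtain c where C: "K - J = {c}" using card_1_singleton_iff by (metis One_nat_def)
  have "card (J \<union> K) = 4" using card_Un_Int[OF fin] assms by simp
  then have "card (S - (J \<union> K)) = 2" using assms \<open>finite S\<close> fin by (simp add: card_Diff_subset)
  then obtain d d' where D: "S - (J \<union> K) = {d, d'}" "d \<noteq> d'" using card_2_iff by metis
  have J: "J = {a, a', b}" and K: "K = {a, a', c}" using A B C by blast+
  have "S = {a, a', b, c, d, d'}" using assms(1,2) D(1) unfolding J K by blast
  moreover have "distinct [a, a', b, c, d, d']" using A B C D by auto
  ultimately show thesis using that J K by blast
qed

lemma overlapping_representativeE:
  assumes J: "J \<subseteq> {1..6}" "card J = 3" and K: "K \<subseteq> {1..6}" "card K = 3"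
  obtains K' where "K' \<subseteq> {1..6}" "card K' = 3" "crosses K' = crosses K"
    "K' = J \<or> card (J \<inter> K') = 2"
proof -
  have finJ: "finite J" using J finite_subset by blast
  obtain K' where K': "K' \<subseteq> {1..6}" "card K' = 3" "crosses K' = crosses K"
    and "2 \<le> card (J \<inter> K')"
  proof (cases "2 \<le> card (J \<inter> K)")
    case True
    then show thesis using that K by blast
  next
    case False
    have "J \<inter> ({1..6} - K) = J - K" using J by blast
    then have "card (J \<inter> ({1..6} - K)) = card (J - K)" by simp
    also have "\<dots> = 3 - card (J \<inter> K)" using finJ J by (simp add: card_Diff_subset_Int)
    finally have "2 \<le> card (J \<inter> ({1..6} - K))" using False by linarith
    moreover have "card ({1..6} - K) = 3" using K by (simp add: card_Diff_subset finite_subset)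
    ultimately show thesis using that[of "{1..6} - K"] crosses_complement by blast
  qed
  moreover have "K' = J" if "card (J \<inter> K') = 3"
  proof -
    have "finite K'" using K'(1) finite_subset by blast
    have "J \<inter> K' = J" using card_subset_eq[OF finJ Int_lower1, of K'] that J(2) by simp
    moreover have "J \<inter> K' = K'"
      using card_subset_eq[OF \<open>finite K'\<close> Int_lower2, of J] that K'(2) by simp
    ultimately show "K' = J" by simp
  qed
  moreover have "card (J \<inter> K') \<le> 3" using card_mono[OF finJ Int_lower1] J(2) by simp
  ultimately show thesis using that[of K'] by fastforce
qed

lemma crossings_sum_in_range_PhiU:
  assumes J: "J \<subseteq> {1..6}" "card J = 3" and K: "K \<subseteq> {1..6}" "card K = 3"
    and "0 \<le> \<alpha>" "0 \<le> \<beta>"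
  shows "\<exists>v. PhiU v = (\<lambda>P. (if crosses J P then \<alpha> else 0) + (if crosses K P then \<beta> else 0))"
proof -
  obtain K' where K': "K' \<subseteq> {1..6}" "card K' = 3" "crosses K' = crosses K"
    and "K' = J \<or> card (J \<inter> K') = 2"
    using overlapping_representativeE[OF J K] .
  then consider "K' = J" | "card (J \<inter> K') = 2" by blast
  then show ?thesis
  proof cases
    case 1
    obtain v where "PhiU v = (\<lambda>P. if crosses J P then \<alpha> + \<beta> else 0)"
      using crossing_in_range_PhiU[of "\<alpha> + \<beta>" J] assms(5,6) by auto
    then have "PhiU v = (\<lambda>P. (if crosses J P then \<alpha> else 0) + (if crosses K P then \<beta> else 0))"
      using K'(3) 1 by (simp add: fun_eq_iff)
    then show ?thesis by blast
  next
    case 2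
    have "card {1..6::nat} = 6" by simp
    then obtain a a' b c d d' where labels: "distinct [a, a', b, c, d, d']"
      "{1..6} = {a, a', b, c, d, d'}" "J = {a, a', b}" "K' = {a, a', c}"
      by (rule two_overlapping_triplesE[OF J(1) K'(1) _ J(2) K'(2) 2])
    from PhiU_two_crossings[OF labels(1,2) assms(5,6)] show ?thesis
      unfolding labels(3) K'(3)[symmetric] labels(4) .
  qed
qed

theorem proposition7p5:
  fixes \<rho>1 \<rho>2 :: "(nat set set \<Rightarrow> real) set"
  assumes "extreme_ray_C62 \<rho>1" and "extreme_ray_C62 \<rho>2"
    and "ray_type33 \<rho>1" and "ray_type33 \<rho>2"
    and "\<rho>1 \<noteq> \<rho>2"
  shows "cone_sum \<rho>1 \<rho>2 \<subseteq> Phi_image"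
proof
  fix z assume "z \<in> cone_sum \<rho>1 \<rho>2"
  then obtain x y where z: "z = (\<lambda>P. x P + y P)" and "x \<in> \<rho>1" "y \<in> \<rho>2"
    unfolding cone_sum_def by blast
  obtain J \<sigma> where J: "J \<subseteq> {1..6}" "card J = 3" "0 \<le> \<sigma>"
    and x: "x = (\<lambda>P. if crosses J P then \<sigma> else 0)"
    using ray_type33_memberE[OF assms(3) \<open>x \<in> \<rho>1\<close>] .
  obtain K \<tau> where K: "K \<subseteq> {1..6}" "card K = 3" "0 \<le> \<tau>"
    and y: "y = (\<lambda>P. if crosses K P then \<tau> else 0)"
    using ray_type33_memberE[OF assms(4) \<open>y \<in> \<rho>2\<close>] .
  obtain v where "PhiU v = z"
    using crossings_sum_in_range_PhiU[OF J(1,2) K(1,2) J(3) K(3)] unfolding z x y by blast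
  then show "z \<in> Phi_image" using PhiU_in_Phi_image by blast
qed

end
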